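(* Let $n$ be a positive integer and $i,k\in\{1,\ldots,n\}$. Suppose that $H\sim\text{Hyp}(n,i,k)$ satisfies (1) $\mathbb{E}(H) \in (1, \min\{i,k\} -2]$ and (2) $\frac{(n-i)(n-k)}{n}> 1$. Then \[ \mathbb{E}(|H-ik/n|) \ge \frac{e^{-1/8}}{2\sqrt{2}} \cdot \sqrt{\frac{n-1 }{n}} \cdot \sqrt{\text{Var}(H)}. \]
   Context: $\text{Hyp}(n,i,k)$ denotes the hypergeometric distribution: the number of black marbles in a sample without replacement of size $k$ from an urn with $i$ black and $n-i$ white marbles, i.e. $\mathbb{P}(H=j)=\binom{i}{j}\binom{n-i}{k-j}/\binom{n}{k}$. One has $\mathbb{E}(H)=ik/n$ and $\text{Var}(H)=k\cdot\frac{i}{n}\cdot\frac{n-i}{n}\cdot\frac{n-k}{n-1}$. *)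

theory Defs
  imports "HOL-Analysis.Analysis"
begin

text \<open>Probability mass function of Hyp(n,i,k): number of black marbles in a sample
 without replacement of size k from an urn with i black and n-i white marbles.\<close>
definition hyp_pmf :: "nat \<Rightarrow> nat \<Rightarrow> nat \<Rightarrow> nat \<Rightarrow> real" where
  "hyp_pmf n i k j = real ((i choose j) * ((n - i) choose (k - j))) / real (n choose k)"

text \<open>Expectation of g(H) for H ~ Hyp(n,i,k); the support is contained in {0..k}.\<close>
definition hyp_expect :: "nat \<Rightarrow> nat \<Rightarrow> nat \<Rightarrow> (real \<Rightarrow> real) \<Rightarrow> real" where
  "hyp_expect n i k g = (\<Sum>j=0..k. g (real j) * hyp_pmf n i k j)"

definition hyp_mean :: "nat \<Rightarrow> nat \<Rightarrow> nat \<Rightarrow> real" where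
  "hyp_mean n i k = hyp_expect n i k (\<lambda>x. x)"

definition hyp_var :: "nat \<Rightarrow> nat \<Rightarrow> nat \<Rightarrow> real" where
  "hyp_var n i k = hyp_expect n i k (\<lambda>x. (x - hyp_mean n i k)\<^sup>2)"

end

theory Submission
  imports Defs
begin

(* For w >= 0 and real t one has 3 w^2 t^2 <= 2 w^3 |t| + t^4, the difference being
   |t| (|t| - w)^2 (|t| + 2 w).  Averaging over a distribution with E Y^4 <= C (E Y^2)^2
   and choosing w^2 = C E Y^2 yields E |Y| >= sqrt (E Y^2 / C).
   For H ~ Hyp(n,i,k) the factorial moments E (H choose r) = (i choose r) (k choose r) /
   (n choose r) give E (H - mu)^4 = Var(H)^2 (3 + gamma), with gamma the classical excess
   kurtosis.  The hypotheses say that each of the four cells of the 2x2 table (black/white,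
   drawn/not drawn) has expected count at least 1, and this forces gamma <= 5.  Hence
   E |H - mu| >= sqrt (Var H / 8), which is stronger than the claim since exp (-1/8) and
   sqrt ((n - 1) / n) are at most 1. *)

lemma sum_choose_mult_choose_choose:
  fixes i k n r :: nat
  assumes "r \<le> i" "r \<le> k" "i \<le> n"
  shows "(\<Sum>j=0..k. (j choose r) * ((i choose j) * ((n - i) choose (k - j))))
       = (i choose r) * ((n - r) choose (k - r))"
proof -
  have subset_of_subset: "(j choose r) * (i choose j) = (i choose r) * ((i - r) choose (j - r))"
    if "r \<le> j" for j
  proof (cases "j \<le> i")
    case True
    then show ?thesis using choose_mult[OF that True] by (simp add: mult.commute)
  next
    case False
    then show ?thesis using that assms(1) by (simp add: binomial_eq_0)
  qed
  have "(\<Sum>j=0..k. (j choose r) * ((i choose j) * ((n - i) choose (k - j))))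
      = (\<Sum>j=r..k. (j choose r) * ((i choose j) * ((n - i) choose (k - j))))"
    by (rule sum.mono_neutral_right) auto
  also have "\<dots> = (\<Sum>l=0..k-r. ((r + l) choose r) * (i choose (r + l)) * ((n - i) choose (k - r - l)))"
    using sum.atLeastAtMost_shift_0[OF assms(2)] by (simp add: mult.assoc)
  also have "\<dots> = (i choose r) * (\<Sum>l\<le>k-r. ((i - r) choose l) * ((n - i) choose (k - r - l)))"
    by (simp add: subset_of_subset sum_distrib_left atLeast0AtMost mult.assoc)
  also have "\<dots> = (i choose r) * ((n - r) choose (k - r))"
    using vandermonde[of "i - r" "n - i" "k - r"] assms by simp
  finally show ?thesis .
qed

lemma hyp_expect_gchoose:
  assumes "i \<le> n" "k \<le> n"
  shows "hyp_expect n i k (\<lambda>x. x gchoose r) = real (i choose r) * real (k choose r) / real (n choose r)"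
proof (cases "r \<le> i \<and> r \<le> k")
  case True
  have "(n choose k) * (k choose r) = (n choose r) * ((n - r) choose (k - r))"
    using choose_mult True assms by simp
  then have nk: "real (n choose k) * real (k choose r) = real (n choose r) * real ((n - r) choose (k - r))"
    by (metis of_nat_mult)
  have "hyp_expect n i k (\<lambda>x. x gchoose r)
      = real (\<Sum>j=0..k. (j choose r) * ((i choose j) * ((n - i) choose (k - j)))) / real (n choose k)"
    by (simp add: hyp_expect_def hyp_pmf_def binomial_gbinomial[symmetric] sum_divide_distrib)
  also have "\<dots> = real (i choose r) * real ((n - r) choose (k - r)) / real (n choose k)"
    using sum_choose_mult_choose_choose True assms by simp
  also have "\<dots> = real (i choose r) * real (k choose r) / real (n choose r)"
    using nk True assms by (simp add: field_simps)
  finally show ?thesis .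
next
  case False
  have "(real j gchoose r) * hyp_pmf n i k j = 0" if "j \<le> k" for j
    using False that by (cases "j < r") (auto simp: binomial_gbinomial[symmetric] hyp_pmf_def)
  then have "hyp_expect n i k (\<lambda>x. x gchoose r) = 0"
    unfolding hyp_expect_def by (intro sum.neutral) auto
  moreover have "real (i choose r) * real (k choose r) = 0"
    using False by (auto simp: binomial_eq_0)
  ultimately show ?thesis by simp
qed

lemma hyp_expect_add: "hyp_expect n i k (\<lambda>x. f x + g x) = hyp_expect n i k f + hyp_expect n i k g"
  by (simp add: hyp_expect_def distrib_right sum.distrib)

lemma hyp_expect_cmult: "hyp_expect n i k (\<lambda>x. c * f x) = c * hyp_expect n i k f"
  by (simp add: hyp_expect_def sum_distrib_left mult.assoc)

lemma hyp_expect_const: "i \<le> n \<Longrightarrow> k \<le> n \<Longrightarrow> hyp_expect n i k (\<lambda>x. c) = c"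
  using hyp_expect_gchoose[of i n k 0] hyp_expect_cmult[of n i k c "\<lambda>_. 1"] by simp

lemma hyp_mean_eq: "i \<le> n \<Longrightarrow> k \<le> n \<Longrightarrow> hyp_mean n i k = real i * real k / real n"
  using hyp_expect_gchoose[of i n k 1] by (simp add: hyp_mean_def)

lemma power2_diff_eq_gchoose: "((x::real) - c)^2 = 2 * (x gchoose 2) + (1 - 2*c) * x + c^2"
  by (simp add: gbinomial_prod_rev eval_nat_numeral) algebra

lemma power4_diff_eq_gchoose:
  "((x::real) - c)^4 = 24 * (x gchoose 4) + (36 - 24*c) * (x gchoose 3)
     + (14 - 24*c + 12*c^2) * (x gchoose 2) + (1 - 4*c + 6*c^2 - 4*c^3) * x + c^4"
  by (simp add: gbinomial_prod_rev eval_nat_numeral) algebra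

lemma hyp_var_eq:
  assumes "i \<le> n" "k \<le> n" "2 \<le> n"
  shows "hyp_var n i k
    = real i * (real n - real i) * real k * (real n - real k) / ((real n)^2 * (real n - 1))"
proof -
  have "hyp_var n i k = hyp_expect n i k
      (\<lambda>x. 2 * (x gchoose 2) + (1 - 2 * hyp_mean n i k) * x + (hyp_mean n i k)^2)"
    unfolding hyp_var_def power2_diff_eq_gchoose ..
  also have "\<dots> = 2 * (real (i choose 2) * real (k choose 2) / real (n choose 2))
      + (1 - 2 * hyp_mean n i k) * hyp_mean n i k + (hyp_mean n i k)^2"
    using assms by (simp only: hyp_expect_add hyp_expect_cmult hyp_expect_const hyp_expect_gchoose
        flip: hyp_mean_def)
  also have "\<dots> = real i * (real n - real i) * real k * (real n - real k) / ((real n)^2 * (real n - 1))"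
    using assms
    by (simp add: hyp_mean_eq binomial_gbinomial gbinomial_prod_rev eval_nat_numeral divide_simps)
      algebra
  finally show ?thesis .
qed

definition hyp_excess_kurtosis :: "nat \<Rightarrow> nat \<Rightarrow> nat \<Rightarrow> real" where
  "hyp_excess_kurtosis n i k =
    (let N = real n; K = real i; M = real k in
      ((N - 1) * N^2 * (N * (N + 1) - 6 * K * (N - K) - 6 * M * (N - M))
        + 6 * K * (N - K) * M * (N - M) * (5 * N - 6))
      / (K * (N - K) * M * (N - M) * (N - 2) * (N - 3)))"

lemma hyp_fourth_central_moment_eq:
  assumes "i \<le> n" "k \<le> n" "4 \<le> n"
  shows "hyp_expect n i k (\<lambda>x. (x - hyp_mean n i k)^4)
    = (hyp_var n i k)^2 * (3 + hyp_excess_kurtosis n i k)"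
proof -
  define N K M where "N = real n" and "K = real i" and "M = real k"
  define \<mu> where "\<mu> = hyp_mean n i k"
  define P where "P = K * (N - K) * M * (N - M)"
  define B where "B = (N - 1) * N^2 * (N * (N + 1) - 6 * K * (N - K) - 6 * M * (N - M))
    + 6 * K * (N - K) * M * (N - M) * (5 * N - 6)"
  have N: "N \<noteq> 0" "N - 1 \<noteq> 0" "N - 2 \<noteq> 0" "N - 3 \<noteq> 0"
    using assms(3) by (auto simp: N_def)
  have var: "hyp_var n i k = P / (N^2 * (N - 1))"
    using assms by (simp add: hyp_var_eq P_def N_def K_def M_def)
  have kurt: "hyp_excess_kurtosis n i k = B / (P * (N - 2) * (N - 3))"
    by (simp add: hyp_excess_kurtosis_def Let_def B_def P_def N_def K_def M_def mult.assoc)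
  have "hyp_expect n i k (\<lambda>x. (x - \<mu>)^4)
    = 24 * (real (i choose 4) * real (k choose 4) / real (n choose 4))
      + (36 - 24 * \<mu>) * (real (i choose 3) * real (k choose 3) / real (n choose 3))
      + (14 - 24 * \<mu> + 12 * \<mu>^2) * (real (i choose 2) * real (k choose 2) / real (n choose 2))
      + (1 - 4 * \<mu> + 6 * \<mu>^2 - 4 * \<mu>^3) * \<mu> + \<mu>^4"
    using assms unfolding power4_diff_eq_gchoose
    by (simp only: hyp_expect_add hyp_expect_cmult hyp_expect_const hyp_expect_gchoose
        \<mu>_def flip: hyp_mean_def)
  also have "\<dots> = 3 * (P / (N^2 * (N - 1)))^2
      + P / (N^2 * (N - 1)) * (B / (N^2 * (N - 1) * (N - 2) * (N - 3)))"
    using N assms unfolding \<mu>_def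
    by (simp add: hyp_mean_eq binomial_gbinomial gbinomial_prod_rev eval_nat_numeral divide_simps
        P_def B_def N_def K_def M_def) algebra
  also have "\<dots> = (P / (N^2 * (N - 1)))^2 * (3 + B / (P * (N - 2) * (N - 3)))"
    using N by (cases "P = 0") (simp_all add: divide_simps power2_eq_square, algebra)
  finally show ?thesis unfolding var kurt \<mu>_def .
qed

(* K M / N, K (N - M) / N, (N - K) M / N and (N - K) (N - M) / N are the expected
   cell counts of the 2x2 table of Hyp(N, K, M). *)
lemma margins_ge_2_of_cells:
  fixes N K M :: real
  assumes "0 < N"
    and "N \<le> K * M" "N \<le> K * (N - M)" "N \<le> (N - K) * M" "N \<le> (N - K) * (N - M)"
  shows "2 \<le> K" "2 \<le> N - K" "2 \<le> M" "2 \<le> N - M"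
proof -
  have "2 * N \<le> K * N" "2 * N \<le> (N - K) * N" "2 * N \<le> M * N" "2 * N \<le> (N - M) * N"
    using assms(2-5) by (simp_all add: algebra_simps)
  then show "2 \<le> K" "2 \<le> N - K" "2 \<le> M" "2 \<le> N - M"
    using assms(1) by simp_all
qed

lemma cells_product_ge:
  fixes N K M :: real
  assumes "0 \<le> N"
    and "N \<le> K * M" "N \<le> K * (N - M)" "N \<le> (N - K) * M" "N \<le> (N - K) * (N - M)"
  shows "N^3 \<le> 4 * (K * (N - K)) * (M * (N - M))"
proof -
  have diagonal: "N * (a + d) \<le> 2 * (a * d)" if "N \<le> a" "N \<le> d" for a d :: real
    using mult_left_mono[OF that(2), of a] mult_right_mono[OF that(1), of d] that assms(1)
    by (simp add: algebra_simps)
  have "N^3 = N * ((K * M + (N - K) * (N - M)) + (K * (N - M) + (N - K) * M))"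
    by algebra
  also have "\<dots> = N * (K * M + (N - K) * (N - M)) + N * (K * (N - M) + (N - K) * M)"
    by (rule distrib_left)
  also have "\<dots> \<le> 2 * (K * M * ((N - K) * (N - M))) + 2 * (K * (N - M) * ((N - K) * M))"
    using assms(2-5) by (intro add_mono diagonal)
  also have "\<dots> = 4 * (K * (N - K)) * (M * (N - M))"
    by algebra
  finally show ?thesis .
qed

lemma excess_kurtosis_numerator_le:
  fixes N K M :: real
  assumes "N \<in> \<nat>" "0 < N"
    and cells: "N \<le> K * M" "N \<le> K * (N - M)" "N \<le> (N - K) * M" "N \<le> (N - K) * (N - M)"
  shows "(N - 1) * N^2 * (N * (N + 1) - 6 * K * (N - K) - 6 * M * (N - M))
      + 6 * K * (N - K) * M * (N - M) * (5 * N - 6)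
    \<le> 5 * (K * (N - K) * M * (N - M) * (N - 2) * (N - 3))"
proof -
  define u v c where "u = K * (N - K)" and "v = M * (N - M)" and "c = 5 * N^2 - 55 * N + 66"
  note margins = margins_ge_2_of_cells[OF assms(2) cells]
  have N4: "4 \<le> N"
    using margins by linarith
  have u_ge: "2 * (N - 2) \<le> u"
    using mult_nonneg_nonneg[of "K - 2" "N - K - 2"] margins by (simp add: u_def algebra_simps)
  have v_ge: "2 * (N - 2) \<le> v"
    using mult_nonneg_nonneg[of "M - 2" "N - M - 2"] margins by (simp add: v_def algebra_simps)
  have u_le: "u \<le> N^2 / 4"
    using zero_le_power2[of "N - 2 * K"] by (simp add: u_def algebra_simps power2_eq_square)
  have v_le: "v \<le> N^2 / 4"
    using zero_le_power2[of "N - 2 * M"] by (simp add: v_def algebra_simps power2_eq_square)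
  have uv_ge: "N^3 / 4 \<le> u * v"
    using cells_product_ge[OF _ cells] N4 by (simp add: u_def v_def)
  have uv_le: "u * v \<le> N^4 / 16"
    using mult_mono[OF u_le v_le] u_ge v_ge N4 by (simp add: power4_eq_xxxx power2_eq_square)
  have core: "(N - 1) * N^2 * (N^2 - 23 * N + 48) \<le> u * v * c"
  proof (cases "10 \<le> N")
    case True
    have "0 \<le> c"
      using mult_nonneg_nonneg[of "N - 10" "5 * N - 5"] True
      by (simp add: c_def algebra_simps power2_eq_square)
    have "10 * N \<le> N^2" "0 \<le> N^3"
      using mult_right_mono[OF True, of N] True by (simp_all add: power2_eq_square)
    then have "0 \<le> N^3 + 41 * N^2 - 218 * N + 192"
      using True by linarith
    then have "0 \<le> N^2 / 4 * (N^3 + 41 * N^2 - 218 * N + 192)"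
      by simp
    then have "(N - 1) * N^2 * (N^2 - 23 * N + 48) \<le> N^3 / 4 * c"
      by (simp add: c_def algebra_simps power2_eq_square power3_eq_cube)
    also have "\<dots> \<le> u * v * c"
      using uv_ge \<open>0 \<le> c\<close> by (rule mult_right_mono)
    finally show ?thesis .
  next
    case False
    (* here c < 0, so the upper bound on u * v is the one that helps *)
    obtain m where m: "N = real m"
      using assms(1) Nats_cases by blast
    then have "m = 4 \<or> m = 5 \<or> m = 6 \<or> m = 7 \<or> m = 8 \<or> m = 9"
      using N4 False by auto
    then have "(N - 1) * N^2 * (N^2 - 23 * N + 48) \<le> N^4 / 16 * c \<and> c \<le> 0"
      unfolding m c_def by (elim disjE) simp_all
    then show ?thesis
      using mult_right_mono_neg[OF uv_le] by (meson order_trans)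
  qed
  have "(N - 1) * N^2 * (N * (N + 1) - 6 * u - 6 * v) \<le> (N - 1) * N^2 * (N^2 - 23 * N + 48)"
    using u_ge v_ge N4 by (intro mult_left_mono) (auto simp: algebra_simps power2_eq_square)
  with core show ?thesis
    by (simp add: u_def v_def c_def algebra_simps power2_eq_square)
qed

lemma hyp_excess_kurtosis_le_5:
  assumes "0 < n"
    and "real n \<le> real i * real k" "real n \<le> real i * (real n - real k)"
        "real n \<le> (real n - real i) * real k" "real n \<le> (real n - real i) * (real n - real k)"
  shows "hyp_excess_kurtosis n i k \<le> 5"
proof -
  note margins = margins_ge_2_of_cells[OF _ assms(2-5)]
  have "0 < real i * (real n - real i) * real k * (real n - real k) * (real n - 2) * (real n - 3)"
    using margins assms(1) by simp
  then show ?thesis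
    using excess_kurtosis_numerator_le[OF _ _ assms(2-5)] assms(1)
    by (simp add: hyp_excess_kurtosis_def Let_def divide_le_eq)
qed

lemma hyp_fourth_central_moment_le:
  assumes "0 < n"
    and "real n \<le> real i * real k" "real n \<le> real i * (real n - real k)"
        "real n \<le> (real n - real i) * real k" "real n \<le> (real n - real i) * (real n - real k)"
  shows "hyp_expect n i k (\<lambda>x. (x - hyp_mean n i k)^4) \<le> 8 * (hyp_var n i k)^2"
proof -
  note margins = margins_ge_2_of_cells[OF _ assms(2-5)]
  have "i \<le> n" "k \<le> n" "4 \<le> n"
    using margins assms(1) by simp_all
  then have "hyp_expect n i k (\<lambda>x. (x - hyp_mean n i k)^4)
      = (hyp_var n i k)^2 * (3 + hyp_excess_kurtosis n i k)"
    by (rule hyp_fourth_central_moment_eq)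
  also have "\<dots> \<le> (hyp_var n i k)^2 * 8"
    using hyp_excess_kurtosis_le_5[OF assms] by (intro mult_left_mono) simp_all
  finally show ?thesis
    by (simp add: mult.commute)
qed

lemma weighted_abs_moment_ge:
  fixes y p :: "'a \<Rightarrow> real"
  assumes "\<And>a. a \<in> A \<Longrightarrow> 0 \<le> p a" "0 < C"
    and "(\<Sum>a\<in>A. y a ^ 4 * p a) \<le> C * (\<Sum>a\<in>A. y a ^ 2 * p a)^2"
  shows "sqrt ((\<Sum>a\<in>A. y a ^ 2 * p a) / C) \<le> (\<Sum>a\<in>A. \<bar>y a\<bar> * p a)"
proof -
  define m1 m2 m4 where "m1 = (\<Sum>a\<in>A. \<bar>y a\<bar> * p a)" and "m2 = (\<Sum>a\<in>A. y a ^ 2 * p a)"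
    and "m4 = (\<Sum>a\<in>A. y a ^ 4 * p a)"
  have "0 \<le> m1" "0 \<le> m2"
    using assms(1) by (auto simp: m1_def m2_def intro: sum_nonneg)
  define w where "w = sqrt (C * m2)"
  have w: "0 \<le> w" "w^2 = C * m2"
    using \<open>0 \<le> m2\<close> assms(2) by (simp_all add: w_def)
  have pointwise: "3 * w^2 * t^2 \<le> 2 * w^3 * \<bar>t\<bar> + t^4" for t :: real
  proof -
    have "0 \<le> \<bar>t\<bar> * (\<bar>t\<bar> - w)^2 * (\<bar>t\<bar> + 2 * w)"
      using w by simp
    also have "\<dots> = \<bar>t\<bar>^4 - 3 * w^2 * \<bar>t\<bar>^2 + 2 * w^3 * \<bar>t\<bar>"
      by algebra
    finally show ?thesis
      by simp
  qed
  have "3 * w^2 * (y a ^ 2 * p a) \<le> 2 * w^3 * (\<bar>y a\<bar> * p a) + y a ^ 4 * p a" if "a \<in> A" for a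
    using mult_right_mono[OF pointwise[of "y a"] assms(1)[OF that]] by (simp add: algebra_simps)
  then have "(\<Sum>a\<in>A. 3 * w^2 * (y a ^ 2 * p a))
      \<le> (\<Sum>a\<in>A. 2 * w^3 * (\<bar>y a\<bar> * p a) + y a ^ 4 * p a)"
    by (rule sum_mono)
  then have "3 * w^2 * m2 \<le> 2 * w^3 * m1 + m4"
    by (simp add: m1_def m2_def m4_def sum.distrib sum_distrib_left)
  moreover have "m4 \<le> w^2 * m2"
    using assms(3) w by (simp add: m2_def m4_def power2_eq_square)
  ultimately have "w^2 * m2 \<le> w^2 * (w * m1)"
    by (simp add: power2_eq_square power3_eq_cube algebra_simps)
  show ?thesis
  proof (cases "m2 = 0")
    case True
    then show ?thesis
      using \<open>0 \<le> m1\<close> by (simp add: m1_def m2_def)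
  next
    case False
    then have "0 < w"
      using w \<open>0 \<le> m2\<close> assms(2) by (auto simp: w_def)
    with \<open>w^2 * m2 \<le> w^2 * (w * m1)\<close> have "m2 / w \<le> m1"
      by (simp add: divide_le_eq mult.commute)
    moreover have "sqrt (m2 / C) = m2 / w"
      using w \<open>0 < w\<close> \<open>0 \<le> m2\<close> assms(2) False
      by (intro real_sqrt_unique) (simp_all add: field_simps power2_eq_square)
    ultimately show ?thesis
      by (simp add: m1_def m2_def)
  qed
qed

theorem theorem4:
  fixes n i k :: nat
  assumes "n \<ge> 1" and "i \<in> {1..n}" and "k \<in> {1..n}"
    and "1 < hyp_mean n i k"
    and "hyp_mean n i k \<le> real (min i k) - 2"
    and "real (n - i) * real (n - k) / real n > 1"
  shows "hyp_expect n i k (\<lambda>x. \<bar>x - real i * real k / real n\<bar>)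
         \<ge> exp (-1/8) / (2 * sqrt 2) * sqrt ((real n - 1) / real n) * sqrt (hyp_var n i k)"
proof -
  have "i \<le> n" "k \<le> n" "0 < real n"
    using assms(1-3) by auto
  then have mean: "hyp_mean n i k = real i * real k / real n"
    by (simp add: hyp_mean_eq)
  have "real i * real k / real n \<le> real i - 2" "real i * real k / real n \<le> real k - 2"
    using assms(5) by (simp_all add: mean)
  then have cells: "real n \<le> real i * real k" "real n \<le> real i * (real n - real k)"
      "real n \<le> (real n - real i) * real k" "real n \<le> (real n - real i) * (real n - real k)"
    using assms(4,6) \<open>i \<le> n\<close> \<open>k \<le> n\<close> \<open>0 < real n\<close>
    by (simp_all add: mean field_simps)
  have var_nonneg: "0 \<le> hyp_var n i k"
    unfolding hyp_var_def hyp_expect_def hyp_pmf_def by (intro sum_nonneg) simp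
  have "hyp_expect n i k (\<lambda>x. (x - hyp_mean n i k)^4) \<le> 8 * (hyp_var n i k)^2"
    using hyp_fourth_central_moment_le cells \<open>0 < real n\<close> by simp
  then have "sqrt (hyp_var n i k / 8) \<le> hyp_expect n i k (\<lambda>x. \<bar>x - real i * real k / real n\<bar>)"
    using weighted_abs_moment_ge[of "{0..k}" "hyp_pmf n i k" 8 "\<lambda>j. real j - hyp_mean n i k"]
    by (simp add: hyp_var_def hyp_expect_def hyp_pmf_def mean)
  moreover have "exp (-1/8) / (2 * sqrt 2) * sqrt ((real n - 1) / real n) * sqrt (hyp_var n i k)
      \<le> 1 / (2 * sqrt 2) * 1 * sqrt (hyp_var n i k)"
    using assms(1) var_nonneg by (intro mult_mono divide_right_mono) auto
  moreover have "1 / (2 * sqrt 2) * 1 * sqrt (hyp_var n i k) = sqrt (hyp_var n i k / 8)"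
    using real_sqrt_mult[of 4 2] by (simp add: real_sqrt_divide)
  ultimately show ?thesis
    by linarith
qed

end
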